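(* (i) No two distinct chordal hyperplanes meet in $\mathbb{CH}^{10}$. (ii) If a discriminant hyperplane and a chordal hyperplane meet in $\mathbb{CH}^{10}$, then they are orthogonal.
   Context: Let $\omega$ be a primitive cube root of unity, $\mathcal{E}=\mathbb{Z}[\omega]$, $\theta=\omega-\bar\omega=\sqrt{-3}$. Let $\Lambda=\mathcal{E}^{11}$ with Hermitian form whose Gram matrix is $(3)\oplus M\oplus M\oplus\begin{pmatrix}0&\theta\\ \bar\theta&0\end{pmatrix}$, where $M$ is the $4\times4$ matrix with $3$ on the diagonal, $\theta$ at $(i,i+1)$, $\bar\theta$ at $(i+1,i)$, $0$ elsewhere. $\mathbb{CH}^{10}$ is the set of negative lines in $\Lambda\otimes_{\mathcal{E}}\mathbb{C}$. A root is $r\in\Lambda$ with $\langle r,r\rangle=3$; nodal if $\langle r,\Lambda\rangle=\theta\mathcal{E}$, chordal if $\langle r,\Lambda\rangle=3\mathcal{E}$. A discriminant (resp. chordal) hyperplane is $r^\perp\cap\mathbb{CH}^{10}$ for a nodal (resp. chordal) root $r$. Hyperplanes $r^\perp$ and $s^\perp$ are orthogonal when $\langle r,s\rangle=0$. *)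

theory Defs
  imports Complex_Main
begin

text \<open>Eisenstein integers.  \<omega> = exp(2\<pi>i/3), \<theta> = \<omega> - conj \<omega> = sqrt(-3).\<close>

definition omega :: complex where
  "omega = Complex (-1/2) (sqrt 3 / 2)"

definition theta :: complex where
  "theta = omega - cnj omega"

definition Eis :: "complex set" where
  "Eis = {of_int a + of_int b * omega | a b. True}"

text \<open>Vectors of C^11 are represented as functions nat => complex supported on {0..<11}.\<close>

definition cvec :: "(nat \<Rightarrow> complex) set" where
  "cvec = {x. \<forall>i\<ge>11. x i = 0}"

definition Lam :: "(nat \<Rightarrow> complex) set" where
  "Lam = {x \<in> cvec. \<forall>i<11. x i \<in> Eis}"

text \<open>Gram matrix (3) + M + M + [[0,theta],[conj theta,0]], indices 0..10:
  index 0 is the (3) block, 1..4 and 5..8 are the two M blocks, 9..10 the hyperbolic block.\<close>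

definition gram :: "nat \<Rightarrow> nat \<Rightarrow> complex" where
  "gram i j =
     (if i = j then (if i \<le> 8 then 3 else 0)
      else if j = Suc i \<and> i \<in> {1,2,3,5,6,7,9} then theta
      else if i = Suc j \<and> j \<in> {1,2,3,5,6,7,9} then cnj theta
      else 0)"

definition herm :: "(nat \<Rightarrow> complex) \<Rightarrow> (nat \<Rightarrow> complex) \<Rightarrow> complex" where
  "herm x y = (\<Sum>i<11. \<Sum>j<11. x i * gram i j * cnj (y j))"

definition is_root :: "(nat \<Rightarrow> complex) \<Rightarrow> bool" where
  "is_root r \<longleftrightarrow> r \<in> Lam \<and> herm r r = 3"

definition nodal_root :: "(nat \<Rightarrow> complex) \<Rightarrow> bool" where
  "nodal_root r \<longleftrightarrow> is_root r \<and> (\<lambda>x. herm r x) ` Lam = {theta * e | e. e \<in> Eis}"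

definition chordal_root :: "(nat \<Rightarrow> complex) \<Rightarrow> bool" where
  "chordal_root r \<longleftrightarrow> is_root r \<and> (\<lambda>x. herm r x) ` Lam = {3 * e | e. e \<in> Eis}"

definition cline :: "(nat \<Rightarrow> complex) \<Rightarrow> (nat \<Rightarrow> complex) set" where
  "cline v = {(\<lambda>i. c * v i) | c. True}"

definition CH10 :: "(nat \<Rightarrow> complex) set set" where
  "CH10 = {cline v | v. v \<in> cvec \<and> Re (herm v v) < 0}"

definition hyperplane :: "(nat \<Rightarrow> complex) \<Rightarrow> (nat \<Rightarrow> complex) set set" where
  "hyperplane r = {L \<in> CH10. \<forall>v\<in>L. herm v r = 0}"

end

theory Submission
  imports Defs
begin

text \<open>
  Completing squares shows that the form is \<open>3\<bar>x\<^sub>0\<bar>\<^sup>2\<close> plus two positive definite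
  copies of \<open>M\<close> plus a hyperbolic plane, so it is positive definite on the orthogonal
  complement of any negative vector. If a negative vector is orthogonal to roots \<open>r\<close> and
  \<open>s\<close>, then so is \<open>u = 3r - \<langle>r,s\<rangle>s\<close>, whose norm is \<open>27 - 3\<bar>\<langle>r,s\<rangle>\<bar>\<^sup>2\<close>;
  hence \<open>\<bar>\<langle>r,s\<rangle>\<bar> < 3\<close> or \<open>r\<close> is a multiple of \<open>s\<close>. If \<open>s\<close> is chordal then
  \<open>\<langle>r,s\<rangle> \<in> 3\<E>\<close>, so the first alternative means \<open>\<langle>r,s\<rangle> = 0\<close>.

  Two chordal roots are never orthogonal: \<open>\<langle>r,e\<^sub>k\<rangle> \<in> 3\<E>\<close> forces \<open>\<theta> | r\<^sub>k\<close> for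
  \<open>k \<ge> 1\<close>, hence \<open>\<langle>r,s\<rangle> \<equiv> 3 r\<^sub>0 s\<^sub>0\<close> modulo \<open>3\<theta>\<close>, and \<open>\<langle>r,r\<rangle> = 3\<close> makes
  \<open>r\<^sub>0\<close> a unit modulo \<open>\<theta>\<close>. So meeting chordal hyperplanes coincide. A nodal root is
  never a multiple of a chordal one, because \<open>\<theta> \<in> \<langle>r,\<Lambda>\<rangle>\<close> but \<open>\<theta> \<notin> 3\<E>\<close>;
  so a meeting nodal and chordal hyperplane are orthogonal.
\<close>

section \<open>Eisenstein integers\<close>

lemma omega_squared: "omega * omega = -1 - omega"
  by (simp add: omega_def complex_eq_iff field_simps)

lemma cnj_omega: "cnj omega = -1 - omega"
  by (simp add: omega_def complex_eq_iff)

lemma theta_eq: "theta = 1 + 2 * omega"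
  by (simp add: theta_def cnj_omega)

lemma cnj_theta: "cnj theta = - theta"
  by (simp add: theta_def)

lemma theta_squared: "theta * theta = -3"
proof -
  have "theta * theta = 1 + 4 * omega + 4 * (omega * omega)"
    by (simp add: theta_eq algebra_simps)
  also have "\<dots> = -3" by (simp add: omega_squared)
  finally show ?thesis .
qed

lemma theta_nonzero: "theta \<noteq> 0"
  using theta_squared by auto

lemma norm_theta_squared: "(cmod theta)^2 = 3"
proof -
  have "(cmod theta)^2 = Re (theta * cnj theta)" by (simp add: complex_mult_cnj cmod_power2)
  then show ?thesis by (simp add: cnj_theta theta_squared)
qed

lemma Eis_iff: "z \<in> Eis \<longleftrightarrow> (\<exists>a b. z = of_int a + of_int b * omega)"
  by (auto simp: Eis_def)

lemma Eis_add [intro]: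
  assumes "x \<in> Eis" "y \<in> Eis" shows "x + y \<in> Eis"
proof -
  obtain a b c d where "x = of_int a + of_int b * omega" "y = of_int c + of_int d * omega"
    using assms Eis_iff by meson
  then have "x + y = of_int (a + c) + of_int (b + d) * omega" by (simp add: algebra_simps)
  then show ?thesis unfolding Eis_iff by blast
qed

lemma Eis_uminus [intro]:
  assumes "x \<in> Eis" shows "- x \<in> Eis"
proof -
  obtain a b where "x = of_int a + of_int b * omega" using assms Eis_iff by meson
  then have "- x = of_int (- a) + of_int (- b) * omega" by simp
  then show ?thesis unfolding Eis_iff by blast
qed

lemma Eis_diff [intro]: "x \<in> Eis \<Longrightarrow> y \<in> Eis \<Longrightarrow> x - y \<in> Eis"
  using Eis_add[of x "- y"] by auto

lemma Eis_mult [intro]: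
  assumes "x \<in> Eis" "y \<in> Eis" shows "x * y \<in> Eis"
proof -
  obtain a b c d where "x = of_int a + of_int b * omega" "y = of_int c + of_int d * omega"
    using assms Eis_iff by meson
  then have "x * y = of_int a * of_int c + (of_int a * of_int d + of_int b * of_int c) * omega
      + of_int b * of_int d * (omega * omega)"
    by (simp add: algebra_simps)
  also have "\<dots> = of_int (a * c - b * d) + of_int (a * d + b * c - b * d) * omega"
    by (simp add: omega_squared algebra_simps)
  finally show ?thesis unfolding Eis_iff by blast
qed

lemma Eis_of_int [intro]: "of_int n \<in> Eis"
  unfolding Eis_iff by (rule exI[of _ n], rule exI[of _ 0]) simp

lemma Eis_0 [intro]: "0 \<in> Eis" and Eis_1 [intro]: "1 \<in> Eis"
  using Eis_of_int[of 0] Eis_of_int[of 1] by simp_all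

lemma Eis_theta [intro]: "theta \<in> Eis"
proof -
  have "theta = of_int 1 + of_int 2 * omega" by (simp add: theta_eq)
  then show ?thesis unfolding Eis_iff by blast
qed

lemma Eis_cnj [intro]:
  assumes "x \<in> Eis" shows "cnj x \<in> Eis"
proof -
  obtain a b where "x = of_int a + of_int b * omega" using assms Eis_iff by meson
  then have "cnj x = of_int (a - b) + of_int (- b) * omega" by (simp add: cnj_omega algebra_simps)
  then show ?thesis unfolding Eis_iff by blast
qed

lemma Eis_norm_squared_Ints:
  assumes "x \<in> Eis" shows "(cmod x)^2 \<in> \<int>"
proof -
  obtain a b where x: "x = of_int a + of_int b * omega" using assms Eis_iff by meson
  have "(cmod x)^2 = (of_int a - of_int b / 2)^2 + (of_int b * sqrt 3 / 2)^2"
    by (simp add: cmod_power2 x omega_def)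
  also have "\<dots> = of_int (a * a - a * b + b * b)" by (simp add: power2_eq_square algebra_simps)
  finally show ?thesis by simp
qed

lemma Eis_eq_0_if_norm_less_1:
  assumes "x \<in> Eis" "cmod x < 1" shows "x = 0"
proof -
  obtain n where n: "(cmod x)^2 = of_int n" using Eis_norm_squared_Ints[OF assms(1)] Ints_cases by blast
  have "0 \<le> n" "n < 1" using n assms(2) power_less_one_iff[of "cmod x" 2] zero_le_power2[of "cmod x"] by simp_all
  then have "n = 0" by simp
  then show ?thesis using n by simp
qed

definition Eis_dvd :: "complex \<Rightarrow> complex \<Rightarrow> bool" where
  "Eis_dvd d z \<longleftrightarrow> (\<exists>e\<in>Eis. z = d * e)"

lemma Eis_dvd_0 [intro]: "Eis_dvd d 0"
  unfolding Eis_dvd_def by auto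

lemma Eis_dvd_add [intro]: "Eis_dvd d a \<Longrightarrow> Eis_dvd d b \<Longrightarrow> Eis_dvd d (a + b)"
  unfolding Eis_dvd_def by (metis Eis_add distrib_left)

lemma Eis_dvd_diff [intro]: "Eis_dvd d a \<Longrightarrow> Eis_dvd d b \<Longrightarrow> Eis_dvd d (a - b)"
  unfolding Eis_dvd_def by (metis Eis_diff right_diff_distrib)

lemma Eis_dvd_mult [intro]: "Eis_dvd d a \<Longrightarrow> Eis_dvd d' b \<Longrightarrow> Eis_dvd (d * d') (a * b)"
  unfolding Eis_dvd_def by (metis Eis_mult mult.assoc mult.left_commute)

lemma Eis_dvd_mult_Eis [intro]: "Eis_dvd d a \<Longrightarrow> c \<in> Eis \<Longrightarrow> Eis_dvd d (a * c)"
  using Eis_dvd_mult[of d a 1 c] by (simp add: Eis_dvd_def)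

lemma Eis_dvd_cnj [intro]: "Eis_dvd d z \<Longrightarrow> Eis_dvd (cnj d) (cnj z)"
  unfolding Eis_dvd_def by auto

lemma Eis_dvd_sum: "(\<And>i. i \<in> A \<Longrightarrow> Eis_dvd d (f i)) \<Longrightarrow> Eis_dvd d (\<Sum>i\<in>A. f i)"
  by (induction A rule: infinite_finite_induct) auto

lemma Eis_dvd_theta_if_Eis_dvd_3_mult_theta:
  assumes "Eis_dvd 3 (theta * z)" shows "Eis_dvd theta z"
proof -
  obtain e where e: "e \<in> Eis" "theta * z = 3 * e" using assms Eis_dvd_def by auto
  have "theta * (theta * - e) = - (theta * theta) * e" by (simp add: algebra_simps)
  then have "theta * z = theta * (theta * - e)" using e(2) theta_squared by simp
  then have "z = theta * - e" using mult_left_cancel[OF theta_nonzero] by blast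
  then show ?thesis using e(1) Eis_dvd_def by blast
qed

lemma not_Eis_dvd_theta_1: "\<not> Eis_dvd theta 1"
proof
  assume "Eis_dvd theta 1"
  then obtain e where e: "e \<in> Eis" "1 = theta * e" using Eis_dvd_def by auto
  obtain n where n: "(cmod e)^2 = of_int n" using Eis_norm_squared_Ints[OF e(1)] Ints_cases by blast
  have "1 = (cmod (theta * e))^2" using e(2) by (metis norm_one one_power2)
  also have "\<dots> = 3 * of_int n" by (simp add: norm_mult power_mult_distrib norm_theta_squared n)
  finally have "1 = 3 * n" by linarith
  then show False by presburger
qed

lemma not_Eis_dvd_3_theta: "\<not> Eis_dvd 3 theta"
  using Eis_dvd_theta_if_Eis_dvd_3_mult_theta[of 1] not_Eis_dvd_theta_1 by auto

lemma Eis_dvd_3_eq_0_if_norm_less_3: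
  assumes "Eis_dvd 3 z" "cmod z < 3" shows "z = 0"
proof -
  obtain e where "e \<in> Eis" "z = 3 * e" using assms(1) Eis_dvd_def by auto
  then show ?thesis using assms(2) Eis_eq_0_if_norm_less_1[of e] by (simp add: norm_mult)
qed

section \<open>The Hermitian form\<close>

lemma lessThan_11: "{..<11::nat} = {0,1,2,3,4,5,6,7,8,9,10}"
  by (simp add: lessThan_nat_numeral lessThan_Suc insert_commute)

definition M_form :: "(nat \<Rightarrow> complex) \<Rightarrow> (nat \<Rightarrow> complex) \<Rightarrow> nat \<Rightarrow> complex" where
  "M_form x y b =
     3 * (x b * cnj (y b) + x (b+1) * cnj (y (b+1)) + x (b+2) * cnj (y (b+2)) + x (b+3) * cnj (y (b+3)))
     + theta * (x b * cnj (y (b+1)) + x (b+1) * cnj (y (b+2)) + x (b+2) * cnj (y (b+3)))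
     + cnj theta * (x (b+1) * cnj (y b) + x (b+2) * cnj (y (b+1)) + x (b+3) * cnj (y (b+2)))"

lemma herm_expand:
  "herm x y = 3 * x 0 * cnj (y 0) + M_form x y 1 + M_form x y 5
     + theta * x 9 * cnj (y 10) + cnj theta * x 10 * cnj (y 9)"
  unfolding herm_def M_form_def lessThan_11
  by (simp add: gram_def algebra_simps eval_nat_numeral)

lemma herm_cnj: "herm y x = cnj (herm x y)"
  unfolding herm_expand M_form_def by (simp add: cnj_theta algebra_simps)

lemma herm_lincomb_left: "herm (\<lambda>i. a * x i + b * y i) z = a * herm x z + b * herm y z"
  unfolding herm_def by (simp add: distrib_right sum.distrib sum_distrib_left mult.assoc)

lemma herm_lincomb_right: "herm z (\<lambda>i. a * x i + b * y i) = cnj a * herm z x + cnj b * herm z y"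
  unfolding herm_def by (simp add: distrib_left sum.distrib sum_distrib_left algebra_simps)

lemma herm_scale_left: "herm (\<lambda>i. a * x i) z = a * herm x z"
  unfolding herm_def by (simp add: sum_distrib_left mult.assoc)

lemma herm_scale_right: "herm z (\<lambda>i. a * x i) = cnj a * herm z x"
  unfolding herm_def by (simp add: sum_distrib_left algebra_simps)

lemma M_sum_of_squares:
  fixes t a b c d a' b' c' d' :: complex
  assumes "t * t = -3"
  shows "3 * (a * a' + b * b' + c * c' + d * d') + t * (a * b' + b * c' + c * d') - t * (b * a' + c * b' + d * c')
    = (3*a - t*b) * (3*a' + t*b') / 3 + (2*b - t*c) * (2*b' + t*c') / 2
      + 2 * ((3/2*c - t*d) * (3/2*c' + t*d')) / 3 + d * d'"
proof -
  have "(3*a - t*b) * (3*a' + t*b') / 3 + (2*b - t*c) * (2*b' + t*c') / 2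
      + 2 * ((3/2*c - t*d) * (3/2*c' + t*d')) / 3 + d * d'
   = 3 * (a * a' + b * b' + c * c' + d * d') + t * (a * b' + b * c' + c * d') - t * (b * a' + c * b' + d * c')
     - (t * t + 3) * (b * b' / 3 + c * c' / 2 + 2 * d * d' / 3)"
    by (simp add: field_simps)
  then show ?thesis using assms by simp
qed

definition M_norm :: "(nat \<Rightarrow> complex) \<Rightarrow> nat \<Rightarrow> real" where
  "M_norm x b = (cmod (3 * x b - theta * x (b+1)))^2 / 3 + (cmod (2 * x (b+1) - theta * x (b+2)))^2 / 2
     + 2 * (cmod (3/2 * x (b+2) - theta * x (b+3)))^2 / 3 + (cmod (x (b+3)))^2"

lemma M_form_self: "M_form x x b = of_real (M_norm x b)"
  using M_sum_of_squares[OF theta_squared, of "x b" "cnj (x b)" "x (b+1)" "cnj (x (b+1))"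
      "x (b+2)" "cnj (x (b+2))" "x (b+3)" "cnj (x (b+3))"]
  unfolding M_form_def M_norm_def of_real_add of_real_divide of_real_mult of_real_numeral
    complex_norm_square
  by (simp add: cnj_theta)

definition neg_coord :: "(nat \<Rightarrow> complex) \<Rightarrow> complex" where
  "neg_coord x = x 9 + theta * x 10 / 2"

definition pos_norm :: "(nat \<Rightarrow> complex) \<Rightarrow> real" where
  "pos_norm x = 3 * (cmod (x 0))^2 + M_norm x 1 + M_norm x 5 + (cmod (x 9 - theta * x 10 / 2))^2"

lemma herm_self: "herm x x = of_real (pos_norm x - (cmod (neg_coord x))^2)"
proof -
  have "theta * x 9 * cnj (x 10) + cnj theta * x 10 * cnj (x 9)
      = (x 9 - theta * x 10 / 2) * cnj (x 9 - theta * x 10 / 2) - neg_coord x * cnj (neg_coord x)"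
    unfolding neg_coord_def by (simp add: cnj_theta field_simps)
  then show ?thesis
    unfolding herm_expand M_form_self pos_norm_def of_real_add of_real_diff of_real_mult
      of_real_numeral complex_norm_square
    by (simp add: algebra_simps)
qed

lemma Re_herm_self: "Re (herm x x) = pos_norm x - (cmod (neg_coord x))^2"
  by (simp add: herm_self)

lemma M_norm_nonneg: "M_norm x b \<ge> 0"
  unfolding M_norm_def by simp

lemma pos_norm_nonneg: "pos_norm x \<ge> 0"
  unfolding pos_norm_def using M_norm_nonneg[of x] by (simp add: add_nonneg_nonneg)

lemma M_norm_eq_0:
  assumes "M_norm x b = 0"
  shows "x b = 0 \<and> x (b+1) = 0 \<and> x (b+2) = 0 \<and> x (b+3) = 0"
proof -
  let ?a = "3 * x b - theta * x (b+1)" and ?b = "2 * x (b+1) - theta * x (b+2)"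
    and ?c = "3/2 * x (b+2) - theta * x (b+3)" and ?d = "x (b+3)"
  have nonneg_sum_eq_0: "p = 0 \<and> q = 0 \<and> r = 0 \<and> s = 0"
    if "p / 3 + q / 2 + 2 * r / 3 + s = 0" "0 \<le> p" "0 \<le> q" "0 \<le> r" "0 \<le> s" for p q r s :: real
    using that by linarith
  have "(cmod ?a)^2 = 0 \<and> (cmod ?b)^2 = 0 \<and> (cmod ?c)^2 = 0 \<and> (cmod ?d)^2 = 0"
    using assms unfolding M_norm_def by (intro nonneg_sum_eq_0) simp_all
  then have a: "?a = 0" and b: "?b = 0" and c: "?c = 0" and d: "?d = 0" by simp_all
  have "x (b+2) = 0" using c d by simp
  moreover have "x (b+1) = 0" using b \<open>x (b+2) = 0\<close> by simp
  moreover have "x b = 0" using a \<open>x (b+1) = 0\<close> by simp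
  ultimately show ?thesis using d by simp
qed

lemma pos_norm_eq_0:
  assumes "pos_norm x = 0" "neg_coord x = 0"
  shows "\<forall>i<11. x i = 0"
proof -
  have nonneg_sum_eq_0: "p = 0 \<and> q = 0 \<and> r = 0 \<and> s = 0"
    if "3 * p + q + r + s = 0" "0 \<le> p" "0 \<le> q" "0 \<le> r" "0 \<le> s" for p q r s :: real
    using that by linarith
  have "(cmod (x 0))^2 = 0 \<and> M_norm x 1 = 0 \<and> M_norm x 5 = 0 \<and> (cmod (x 9 - theta * x 10 / 2))^2 = 0"
    using assms(1) unfolding pos_norm_def by (intro nonneg_sum_eq_0) (simp_all add: M_norm_nonneg)
  then have "x 0 = 0" and M: "M_norm x 1 = 0" "M_norm x 5 = 0" and pos: "x 9 - theta * x 10 / 2 = 0"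
    by simp_all
  moreover have "x 9 = 0" "x 10 = 0"
    using pos assms(2) theta_nonzero unfolding neg_coord_def by (simp_all add: field_simps)
  moreover have "x 1 = 0" "x 2 = 0" "x 3 = 0" "x 4 = 0" "x 5 = 0" "x 6 = 0" "x 7 = 0" "x 8 = 0"
    using M_norm_eq_0[OF M(1)] M_norm_eq_0[OF M(2)] by (simp_all add: eval_nat_numeral)
  ultimately have "x i = 0" if "i < 11" for i
    using that unfolding lessThan_iff[symmetric] lessThan_11 by (elim insertE) simp_all
  then show ?thesis by blast
qed

lemma orthogonal_to_negative_vanishes:
  assumes v: "Re (herm v v) < 0" and uv: "herm u v = 0" and uu: "Re (herm u u) \<le> 0"
  shows "\<forall>i<11. u i = 0"
proof -
  have vu: "herm v u = 0" using uv herm_cnj[of v u] by simp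
  define w where "w = (\<lambda>i. neg_coord v * u i + (- neg_coord u) * v i)"
  have "neg_coord w = 0" unfolding w_def neg_coord_def by (simp add: field_simps)
  then have "Re (herm w w) \<ge> 0" using Re_herm_self[of w] pos_norm_nonneg[of w] by simp
  moreover have "herm w w = neg_coord v * cnj (neg_coord v) * herm u u + neg_coord u * cnj (neg_coord u) * herm v v"
    unfolding w_def herm_lincomb_left herm_lincomb_right using uv vu by (simp add: algebra_simps)
  then have "Re (herm w w) = (cmod (neg_coord v))^2 * Re (herm u u) + (cmod (neg_coord u))^2 * Re (herm v v)"
    by (simp add: complex_mult_cnj cmod_power2)
  moreover have "(cmod (neg_coord v))^2 * Re (herm u u) \<le> 0"
    using uu by (simp add: mult_nonneg_nonpos)
  ultimately have "(cmod (neg_coord u))^2 * Re (herm v v) \<ge> 0" by linarith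
  then have nu: "neg_coord u = 0" using v by (simp add: zero_le_mult_iff)
  moreover have "pos_norm u = 0" using Re_herm_self[of u] pos_norm_nonneg[of u] uu nu by simp
  ultimately show ?thesis by (rule pos_norm_eq_0[rotated])
qed

section \<open>Roots and their hyperplanes\<close>

lemma Lam_Eis: "x \<in> Lam \<Longrightarrow> i < 11 \<Longrightarrow> x i \<in> Eis"
  unfolding Lam_def by auto

lemma Lam_vanishes: "x \<in> Lam \<Longrightarrow> 11 \<le> i \<Longrightarrow> x i = 0"
  unfolding Lam_def cvec_def by auto

lemma hyperplanes_meet_negative_vector:
  assumes "hyperplane r \<inter> hyperplane s \<noteq> {}"
  obtains v where "Re (herm v v) < 0" "herm v r = 0" "herm v s = 0"
proof -
  obtain L where L: "L \<in> hyperplane r" "L \<in> hyperplane s" using assms by blast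
  then obtain v where v: "L = cline v" "Re (herm v v) < 0"
    unfolding hyperplane_def CH10_def by auto
  have "v \<in> L" unfolding v(1) cline_def by (rule CollectI, rule exI[of _ 1]) simp
  then show ?thesis using that v(2) L unfolding hyperplane_def by blast
qed

lemma hyperplane_scale:
  assumes "c \<noteq> 0" shows "hyperplane (\<lambda>i. c * s i) = hyperplane s"
  unfolding hyperplane_def herm_scale_right using assms by simp

lemma roots_small_or_proportional:
  assumes r: "is_root r" and s: "is_root s" and v: "Re (herm v v) < 0"
    and vr: "herm v r = 0" and vs: "herm v s = 0"
  shows "cmod (herm r s) < 3 \<or> r = (\<lambda>i. herm r s / 3 * s i)"
proof (cases "cmod (herm r s) < 3")
  case large: False
  define a where "a = herm r s"
  define u where "u = (\<lambda>i. 3 * r i + (- a) * s i)"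
  have rr: "herm r r = 3" and ss: "herm s s = 3" and "r \<in> Lam" "s \<in> Lam"
    using r s unfolding is_root_def by auto
  have "herm r v = 0" "herm s v = 0" using herm_cnj vr vs by (metis complex_cnj_zero)+
  then have uv: "herm u v = 0" unfolding u_def herm_lincomb_left by simp
  have "herm u u = 27 - 3 * (a * cnj a)"
    unfolding u_def herm_lincomb_left herm_lincomb_right rr ss a_def herm_cnj[of s r]
    by (simp add: algebra_simps)
  then have "Re (herm u u) = 27 - 3 * (cmod a)^2" by (simp add: complex_mult_cnj cmod_power2)
  moreover have "3 \<le> cmod a" using large a_def by simp
  then have "3^2 \<le> (cmod a)^2" by (rule power_mono) simp
  ultimately have "Re (herm u u) \<le> 0" by simp
  then have u0: "\<forall>i<11. u i = 0" using orthogonal_to_negative_vanishes[OF v uv] by blast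
  have "r = (\<lambda>i. herm r s / 3 * s i)"
  proof
    fix i
    show "r i = herm r s / 3 * s i"
    proof (cases "i < 11")
      case True
      then show ?thesis using u0 unfolding u_def a_def by (simp add: field_simps)
    next
      case False
      then show ?thesis
        using Lam_vanishes[OF \<open>r \<in> Lam\<close>, of i] Lam_vanishes[OF \<open>s \<in> Lam\<close>, of i] by simp
    qed
  qed
  then show ?thesis ..
qed simp

lemma root_in_Lam: "is_root r \<Longrightarrow> r \<in> Lam"
  unfolding is_root_def by simp

lemma chordal_root_is_root: "chordal_root r \<Longrightarrow> is_root r"
  unfolding chordal_root_def by simp

lemma nodal_root_is_root: "nodal_root r \<Longrightarrow> is_root r"
  unfolding nodal_root_def by simp

lemma chordal_root_herm_dvd:
  assumes "chordal_root r" "x \<in> Lam" shows "Eis_dvd 3 (herm r x)"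
proof -
  have "herm r x \<in> (\<lambda>x. herm r x) ` Lam" using assms(2) by blast
  then show ?thesis using assms(1) unfolding chordal_root_def Eis_dvd_def by auto
qed

lemma nodal_root_herm_theta:
  assumes "nodal_root r" shows "\<exists>x\<in>Lam. herm r x = theta"
proof -
  have "theta * 1 \<in> {theta * e | e. e \<in> Eis}" by blast
  then have "theta \<in> (\<lambda>x. herm r x) ` Lam" using assms unfolding nodal_root_def by simp
  then show ?thesis by (metis imageE)
qed

lemma root_meeting_chordal_orthogonal_or_multiple:
  assumes s: "chordal_root s" and r: "is_root r" and meet: "hyperplane r \<inter> hyperplane s \<noteq> {}"
  shows "herm r s = 0 \<or> (\<exists>c\<in>Eis. r = (\<lambda>i. c * s i))"
proof -
  obtain v where v: "Re (herm v v) < 0" "herm v r = 0" "herm v s = 0"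
    using hyperplanes_meet_negative_vector[OF meet] by blast
  have "Eis_dvd (cnj 3) (cnj (herm s r))"
    using chordal_root_herm_dvd[OF s root_in_Lam[OF r]] by (rule Eis_dvd_cnj)
  then have dvd: "Eis_dvd 3 (herm r s)" by (simp add: herm_cnj[of r s])
  then obtain c where c: "c \<in> Eis" "herm r s = 3 * c" unfolding Eis_dvd_def by blast
  have "cmod (herm r s) < 3 \<or> r = (\<lambda>i. c * s i)"
    using roots_small_or_proportional[OF r chordal_root_is_root[OF s] v] c(2) by simp
  then show ?thesis using Eis_dvd_3_eq_0_if_norm_less_3[OF dvd] c(1) by blast
qed

section \<open>Arithmetic of chordal roots\<close>

definition unit_vec :: "nat \<Rightarrow> nat \<Rightarrow> complex" where
  "unit_vec k = (\<lambda>i. if i = k then 1 else 0)"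

lemma unit_vec_Lam: "k < 11 \<Longrightarrow> unit_vec k \<in> Lam"
  unfolding Lam_def cvec_def unit_vec_def by auto

lemma herm_unit_vec:
  "herm r (unit_vec 1) = 3 * r 1 + cnj theta * r 2"
  "herm r (unit_vec 2) = theta * r 1 + 3 * r 2 + cnj theta * r 3"
  "herm r (unit_vec 3) = theta * r 2 + 3 * r 3 + cnj theta * r 4"
  "herm r (unit_vec 4) = theta * r 3 + 3 * r 4"
  "herm r (unit_vec 5) = 3 * r 5 + cnj theta * r 6"
  "herm r (unit_vec 6) = theta * r 5 + 3 * r 6 + cnj theta * r 7"
  "herm r (unit_vec 7) = theta * r 6 + 3 * r 7 + cnj theta * r 8"
  "herm r (unit_vec 8) = theta * r 7 + 3 * r 8"
  "herm r (unit_vec 9) = cnj theta * r 10"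
  "herm r (unit_vec 10) = theta * r 9"
  by (simp_all add: herm_expand M_form_def unit_vec_def eval_nat_numeral)

text \<open>Modulo \<open>3\<close> the block \<open>M\<close> is \<open>\<theta>\<close> times an antisymmetric tridiagonal matrix
  of determinant \<open>1\<close>.\<close>

lemma M_block_theta_dvd:
  assumes "a \<in> Eis" "b \<in> Eis" "c \<in> Eis" "d \<in> Eis"
    and "Eis_dvd 3 (3 * a + cnj theta * b)" "Eis_dvd 3 (theta * a + 3 * b + cnj theta * c)"
    and "Eis_dvd 3 (theta * b + 3 * c + cnj theta * d)" "Eis_dvd 3 (theta * c + 3 * d)"
  shows "Eis_dvd theta a \<and> Eis_dvd theta b \<and> Eis_dvd theta c \<and> Eis_dvd theta d"
proof -
  have three: "Eis_dvd 3 (3 * z)" if "z \<in> Eis" for z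
    using that unfolding Eis_dvd_def by blast
  have "Eis_dvd 3 (theta * b)"
    using Eis_dvd_diff[OF three[OF assms(1)] assms(5)] by (simp add: cnj_theta)
  moreover have "Eis_dvd 3 (theta * (a - c))"
    using Eis_dvd_diff[OF assms(6) three[OF assms(2)]] by (simp add: cnj_theta algebra_simps)
  moreover have "Eis_dvd 3 (theta * (b - d))"
    using Eis_dvd_diff[OF assms(7) three[OF assms(3)]] by (simp add: cnj_theta algebra_simps)
  moreover have "Eis_dvd 3 (theta * c)"
    using Eis_dvd_diff[OF assms(8) three[OF assms(4)]] by simp
  ultimately have "Eis_dvd theta b" "Eis_dvd theta (a - c)" "Eis_dvd theta (b - d)" "Eis_dvd theta c"
    using Eis_dvd_theta_if_Eis_dvd_3_mult_theta by blast+
  then show ?thesis using Eis_dvd_add[of theta "a - c" c] Eis_dvd_diff[of theta b "b - d"] by simp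
qed

lemma chordal_root_coord_theta_dvd:
  assumes r: "chordal_root r" and i: "1 \<le> i" "i < 11"
  shows "Eis_dvd theta (r i)"
proof -
  have E: "r k \<in> Eis" if "k < 11" for k
    using r that Lam_Eis unfolding chordal_root_def is_root_def by blast
  have dvd: "Eis_dvd 3 (herm r (unit_vec k))" if "k < 11" for k
    using chordal_root_herm_dvd[OF r unit_vec_Lam[OF that]] .
  have "Eis_dvd theta (r 1) \<and> Eis_dvd theta (r 2) \<and> Eis_dvd theta (r 3) \<and> Eis_dvd theta (r 4)"
    using dvd[of 1] dvd[of 2] dvd[of 3] dvd[of 4] unfolding herm_unit_vec
    by (intro M_block_theta_dvd E) simp_all
  moreover have "Eis_dvd theta (r 5) \<and> Eis_dvd theta (r 6) \<and> Eis_dvd theta (r 7) \<and> Eis_dvd theta (r 8)"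
    using dvd[of 5] dvd[of 6] dvd[of 7] dvd[of 8] unfolding herm_unit_vec
    by (intro M_block_theta_dvd E) simp_all
  moreover have "Eis_dvd theta (r 9)"
    using dvd[of 10] unfolding herm_unit_vec by (intro Eis_dvd_theta_if_Eis_dvd_3_mult_theta) simp
  moreover have "Eis_dvd 3 (theta * r 10)"
    using Eis_dvd_diff[OF Eis_dvd_0 dvd[of 9]] unfolding herm_unit_vec by (simp add: cnj_theta)
  then have "Eis_dvd theta (r 10)" by (rule Eis_dvd_theta_if_Eis_dvd_3_mult_theta)
  moreover have "i = 1 \<or> i = 2 \<or> i = 3 \<or> i = 4 \<or> i = 5 \<or> i = 6 \<or> i = 7 \<or> i = 8 \<or> i = 9 \<or> i = 10"
    using i by presburger
  ultimately show ?thesis by auto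
qed

lemma gram_theta_dvd: "i \<noteq> 0 \<Longrightarrow> Eis_dvd theta (gram i j)"
proof -
  have "Eis_dvd theta 3" unfolding Eis_dvd_def using theta_squared by (intro bexI[of _ "- theta"]) auto
  moreover have "Eis_dvd theta theta" unfolding Eis_dvd_def by (intro bexI[of _ 1]) auto
  moreover have "Eis_dvd theta (cnj theta)" unfolding Eis_dvd_def cnj_theta by (intro bexI[of _ "- 1"]) auto
  ultimately show "i \<noteq> 0 \<Longrightarrow> Eis_dvd theta (gram i j)" unfolding gram_def by auto
qed

text \<open>Every term of \<open>\<langle>x,y\<rangle>\<close> other than \<open>3 x\<^sub>0 y\<^sub>0\<close> either vanishes
  (\<open>gram 0 j = gram j 0 = 0\<close> for \<open>j \<noteq> 0\<close>) or is divisible by \<open>\<theta>\<^sup>2 cnj \<theta> = 3\<theta>\<close>.\<close>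

lemma herm_congruence_mod_3_theta:
  assumes "\<And>i. 1 \<le> i \<Longrightarrow> i < 11 \<Longrightarrow> Eis_dvd theta (x i) \<and> Eis_dvd theta (y i)"
  shows "Eis_dvd (3 * theta) (herm x y - 3 * x 0 * cnj (y 0))"
proof -
  define t where "t i j = x i * gram i j * cnj (y j)" for i j
  have summand: "Eis_dvd (3 * theta) (t i j)" if "i < 11" "j < 11" "i \<noteq> 0 \<or> j \<noteq> 0" for i j
  proof (cases "i = 0 \<or> j = 0")
    case True
    then have "gram i j = 0" using that(3) unfolding gram_def by auto
    then show ?thesis unfolding t_def by auto
  next
    case False
    then have "Eis_dvd (theta * theta * cnj theta) (t i j)"
      unfolding t_def using assms[of i] assms[of j] that gram_theta_dvd[of i j]
      by (intro Eis_dvd_mult Eis_dvd_cnj) auto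
    then show ?thesis using theta_squared by (simp add: cnj_theta)
  qed
  have "herm x y = (\<Sum>j<11. t 0 j) + (\<Sum>i\<in>{..<11} - {0}. \<Sum>j<11. t i j)"
    unfolding herm_def t_def by (subst sum.remove[of _ 0]) auto
  also have "(\<Sum>j<11. t 0 j) = t 0 0 + (\<Sum>j\<in>{..<11} - {0}. t 0 j)"
    by (subst sum.remove[of _ 0]) auto
  finally have "herm x y - 3 * x 0 * cnj (y 0)
      = (\<Sum>j\<in>{..<11} - {0}. t 0 j) + (\<Sum>i\<in>{..<11} - {0}. \<Sum>j<11. t i j)"
    by (simp add: t_def gram_def)
  also have "Eis_dvd (3 * theta) \<dots>"
    using summand by (intro Eis_dvd_add Eis_dvd_sum) auto
  finally show ?thesis .
qed

lemma chordal_roots_herm_congruence: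
  assumes "chordal_root r" "chordal_root s"
  shows "Eis_dvd theta (herm r s / 3 - r 0 * cnj (s 0))"
proof -
  obtain e where "e \<in> Eis" "herm r s - 3 * r 0 * cnj (s 0) = 3 * theta * e"
    using herm_congruence_mod_3_theta[of r s] chordal_root_coord_theta_dvd assms
    unfolding Eis_dvd_def by blast
  then have "herm r s / 3 - r 0 * cnj (s 0) = theta * e" by (simp add: field_simps)
  then show ?thesis using \<open>e \<in> Eis\<close> unfolding Eis_dvd_def by blast
qed

text \<open>\<open>r\<^sub>0\<close> and \<open>s\<^sub>0\<close> are units modulo \<open>\<theta>\<close>, so \<open>r\<^sub>0 s\<^sub>0\<close> cannot vanish modulo \<open>\<theta>\<close>:
  \<open>1 = (1 - \<bar>r\<^sub>0\<bar>\<^sup>2) + (1 - \<bar>s\<^sub>0\<bar>\<^sup>2) \<bar>r\<^sub>0\<bar>\<^sup>2 + \<bar>r\<^sub>0 s\<^sub>0\<bar>\<^sup>2\<close> (conjugations omitted).\<close>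

lemma chordal_roots_not_orthogonal:
  assumes r: "chordal_root r" and s: "chordal_root s"
  shows "herm r s \<noteq> 0"
proof
  assume orth: "herm r s = 0"
  have "herm r r = 3" "herm s s = 3" using r s unfolding chordal_root_def is_root_def by auto
  then have unit_r: "Eis_dvd theta (1 - r 0 * cnj (r 0))" and unit_s: "Eis_dvd theta (1 - s 0 * cnj (s 0))"
    using chordal_roots_herm_congruence[OF r r] chordal_roots_herm_congruence[OF s s] by simp_all
  have rs: "Eis_dvd theta (0 - r 0 * cnj (s 0))"
    using chordal_roots_herm_congruence[OF r s] orth by simp
  have "r 0 \<in> Eis" "s 0 \<in> Eis"
    using r s Lam_Eis unfolding chordal_root_def is_root_def by auto
  then have "Eis_dvd theta ((1 - r 0 * cnj (r 0)) + (1 - s 0 * cnj (s 0)) * (r 0 * cnj (r 0))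
      - (0 - r 0 * cnj (s 0)) * (cnj (r 0) * s 0))"
    by (intro Eis_dvd_diff[OF Eis_dvd_add[OF unit_r Eis_dvd_mult_Eis[OF unit_s]] Eis_dvd_mult_Eis[OF rs]])
      auto
  moreover have "(1 - r 0 * cnj (r 0)) + (1 - s 0 * cnj (s 0)) * (r 0 * cnj (r 0))
      - (0 - r 0 * cnj (s 0)) * (cnj (r 0) * s 0) = 1"
    by (simp add: algebra_simps)
  ultimately show False using not_Eis_dvd_theta_1 by metis
qed

lemma nodal_root_not_multiple_of_chordal:
  assumes r: "nodal_root r" and s: "chordal_root s" and "c \<in> Eis"
  shows "r \<noteq> (\<lambda>i. c * s i)"
proof
  assume rc: "r = (\<lambda>i. c * s i)"
  obtain x where x: "x \<in> Lam" "herm r x = theta" using nodal_root_herm_theta[OF r] by blast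
  obtain e where e: "e \<in> Eis" "herm s x = 3 * e"
    using chordal_root_herm_dvd[OF s x(1)] unfolding Eis_dvd_def by blast
  have "theta = c * herm s x" using x(2) unfolding rc herm_scale_left by simp
  also have "\<dots> = 3 * (c * e)" using e(2) by simp
  finally have "theta = 3 * (c * e)" .
  then show False using not_Eis_dvd_3_theta \<open>c \<in> Eis\<close> e(1) unfolding Eis_dvd_def by blast
qed

theorem theorem8p2:
  shows "(\<forall>r s. chordal_root r \<and> chordal_root s \<and> hyperplane r \<noteq> hyperplane s
              \<longrightarrow> hyperplane r \<inter> hyperplane s = {})
       \<and> (\<forall>r s. nodal_root r \<and> chordal_root s \<and> hyperplane r \<inter> hyperplane s \<noteq> {}
              \<longrightarrow> herm r s = 0)"
proof (intro conjI allI impI)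
  fix r s
  assume "chordal_root r \<and> chordal_root s \<and> hyperplane r \<noteq> hyperplane s"
  then have r: "chordal_root r" and s: "chordal_root s" and ne: "hyperplane r \<noteq> hyperplane s"
    by auto
  show "hyperplane r \<inter> hyperplane s = {}"
  proof (rule ccontr)
    assume "hyperplane r \<inter> hyperplane s \<noteq> {}"
    then obtain c where c: "r = (\<lambda>i. c * s i)"
      using root_meeting_chordal_orthogonal_or_multiple[OF s chordal_root_is_root[OF r]]
        chordal_roots_not_orthogonal[OF r s] by blast
    then have "c \<noteq> 0" using chordal_roots_not_orthogonal[OF r s] by (auto simp: herm_scale_left)
    then show False using ne hyperplane_scale c by simp
  qed
next
  fix r s
  assume "nodal_root r \<and> chordal_root s \<and> hyperplane r \<inter> hyperplane s \<noteq> {}"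
  then show "herm r s = 0"
    using root_meeting_chordal_orthogonal_or_multiple[OF _ nodal_root_is_root]
      nodal_root_not_multiple_of_chordal by blast
qed

end
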